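(* Let $(x_j,y_j)\in[0,1]^2$, $1\le j\le 10$, be ten points such that the ten singleton sets $S_j=\{(x_j,y_j)\}$ are $\nu$-transverse for some $\nu>0$. Let $V_j\subset\mathbb{R}^5$ be the plane spanned by $n_j=(1,0,2x_j,0,y_j)$ and $m_j=(0,1,0,2y_j,x_j)$, and let $\pi_j$ be the orthogonal projection onto $V_j$. Then for every linear subspace $V\subset\mathbb{R}^5$, $$\dim V\le \frac14\sum_{j=1}^{10}\dim(\pi_j(V)).$$
   Context: For $u=(u_1,\dots,u_5),v=(v_1,\dots,v_5)\in\mathbb{R}^5$ define $Q_{u,v}(x,y)=2x^2(v_3u_5-v_5u_3)+2y^2(v_5u_4-v_4u_5)+4xy(v_3u_4-v_4u_3)+2x(v_3u_2-v_2u_3)+2y(v_5u_2-v_2u_5)+v_1u_2-v_2u_1$. Ten sets $S_1,\dots,S_{10}\subset[0,1]^2$ are $\nu$-transverse if: (i) for all pairwise distinct $i,j,k\in\{1,\dots,10\}$ and all $(x_i,y_i)\in S_i,(x_j,y_j)\in S_j,(x_k,y_k)\in S_k$ there is a permutation $\pi$ of $\{i,j,k\}$ with $|(y_{\pi(j)}-y_{\pi(i)})[(x_{\pi(j)}-x_{\pi(i)})(y_{\pi(k)}-y_{\pi(i)})-(x_{\pi(k)}-x_{\pi(i)})(y_{\pi(j)}-y_{\pi(i)})]|\ge\nu$; and (ii) for all pairwise distinct $i_1,\dots,i_5\in\{1,\dots,10\}$ and all $(x_j,y_j)\in S_{i_j}$ ($1\le j\le 5$), $\inf_{u,v,w}\max_{1\le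 j\le5}(|Q_{u,v}(x_j,y_j)|+|Q_{u,w}(x_j,y_j)|)\ge\nu$, the infimum over all orthonormal triples $(u,v,w)$ in $\mathbb{R}^5$. *)

theory Defs
  imports "HOL-Analysis.Analysis"
begin

definition Qpoly :: "real^5 \<Rightarrow> real^5 \<Rightarrow> real \<Rightarrow> real \<Rightarrow> real" where
  "Qpoly u v x y =
     2 * x^2 * (v$3 * u$5 - v$5 * u$3) + 2 * y^2 * (v$5 * u$4 - v$4 * u$5)
     + 4 * x * y * (v$3 * u$4 - v$4 * u$3) + 2 * x * (v$3 * u$2 - v$2 * u$3)
     + 2 * y * (v$5 * u$2 - v$2 * u$5) + v$1 * u$2 - v$2 * u$1"

definition orthonormal_triple :: "real^5 \<Rightarrow> real^5 \<Rightarrow> real^5 \<Rightarrow> bool" where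
  "orthonormal_triple u v w \<longleftrightarrow>
     norm u = 1 \<and> norm v = 1 \<and> norm w = 1 \<and> u \<bullet> v = 0 \<and> u \<bullet> w = 0 \<and> v \<bullet> w = 0"

definition nu_transverse :: "real \<Rightarrow> (nat \<Rightarrow> (real \<times> real) set) \<Rightarrow> bool" where
  "nu_transverse \<nu> S \<longleftrightarrow>
     (\<forall>i\<in>{1..10}. S i \<subseteq> {0..1} \<times> {0..1}) \<and>
     (\<forall>i\<in>{1..10}. \<forall>j\<in>{1..10}. \<forall>k\<in>{1..10}. i \<noteq> j \<and> i \<noteq> k \<and> j \<noteq> k \<longrightarrow>
        (\<forall>p :: nat \<Rightarrow> real \<times> real. p i \<in> S i \<and> p j \<in> S j \<and> p k \<in> S k \<longrightarrow>
          (\<exists>\<pi>. \<pi> permutes {i, j, k} \<and>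
             (let xs = (\<lambda>l. fst (p (\<pi> l))); ys = (\<lambda>l. snd (p (\<pi> l))) in
               \<bar>(ys j - ys i) * ((xs j - xs i) * (ys k - ys i) - (xs k - xs i) * (ys j - ys i))\<bar> \<ge> \<nu>)))) \<and>
     (\<forall>ii :: nat \<Rightarrow> nat. (\<forall>j\<in>{1..5}. ii j \<in> {1..10}) \<and> inj_on ii {1..5} \<longrightarrow>
        (\<forall>p :: nat \<Rightarrow> real \<times> real. (\<forall>j\<in>{1..5}. p j \<in> S (ii j)) \<longrightarrow>
          (INF t \<in> {(u, v, w). orthonormal_triple u v w}.
             (case t of (u, v, w) \<Rightarrow>
               Max ((\<lambda>j. \<bar>Qpoly u v (fst (p j)) (snd (p j))\<bar> + \<bar>Qpoly u w (fst (p j)) (snd (p j))\<bar>) ` {1..5})))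
          \<ge> \<nu>))"

definition orth_proj :: "'a::euclidean_space set \<Rightarrow> 'a \<Rightarrow> 'a" where
  "orth_proj W z = (THE q. q \<in> W \<and> (\<forall>w\<in>W. (z - q) \<bullet> w = 0))"

definition nvec :: "real \<Rightarrow> real \<Rightarrow> real^5" where
  "nvec x y = vector [1, 0, 2 * x, 0, y]"

definition mvec :: "real \<Rightarrow> real \<Rightarrow> real^5" where
  "mvec x y = vector [0, 1, 0, 2 * y, x]"

definition Vplane :: "real \<Rightarrow> real \<Rightarrow> (real^5) set" where
  "Vplane x y = span {nvec x y, mvec x y}"

end

theory Submission
  imports Defs "HOL-Computational_Algebra.Polynomial"
begin

text \<open>
  Let U be the orthogonal complement of V, so that dim U = 5 - dim V. The projection of V to
  the plane V_j vanishes exactly when V is orthogonal to V_j, and has dimension less than 2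
  exactly when V_j meets U nontrivially.

  Under this general position assumption a nonzero vector is orthogonal to at most two planes,
  two planes intersect trivially, and at most three planes meet a subspace U of dimension at
  most 2. For the last claim: if U contains a nonzero vector with vanishing first two
  coordinates, the points of all planes meeting U lie on one line. Otherwise U is the graph of
  a linear map on the first two coordinates, and the ratios a : b of the first two coordinates
  of the vectors in U \<inter> V_j are roots of a binary cubic; it vanishes identically only if
  the points lie on a vertical line. Counting the planes with deficient projections separately
  for dim V = 0, 1-2, 3 and 4-5 gives 4 dim V \<le> \<Sum> dim (\<pi>_j V) for any ten or more
  points in general position.
\<close>

lemma coords_eq_0_if_plane_equations:
  fixes a b p q :: real
  assumes "a \<noteq> 0 \<or> b \<noteq> 0" "a * p = 0" "b * q = 0" "a * q + b * p = 0"
  shows "p = 0 \<and> q = 0"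
  using assms by auto

lemma displacements_parallel:
  fixes a b c3 c4 c5 s t p1 q1 p2 q2 :: real
  assumes ab: "a \<noteq> 0 \<or> b \<noteq> 0"
    and 1: "2 * a * p1 = s * c3" "2 * b * q1 = s * c4" "a * q1 + b * p1 = s * c5"
    and 2: "2 * a * p2 = t * c3" "2 * b * q2 = t * c4" "a * q2 + b * p2 = t * c5"
  shows "p1 * q2 - p2 * q1 = 0"
proof (cases "t = 0")
  case True
  then have "p2 = 0 \<and> q2 = 0"
    using 2 by (intro coords_eq_0_if_plane_equations[OF ab]) auto
  then show ?thesis by simp
next
  case False
  have "2 * (a * (t * p1 - s * p2)) = t * (2 * a * p1) - s * (2 * a * p2)"
    "2 * (b * (t * q1 - s * q2)) = t * (2 * b * q1) - s * (2 * b * q2)"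
    "a * (t * q1 - s * q2) + b * (t * p1 - s * p2) = t * (a * q1 + b * p1) - s * (a * q2 + b * p2)"
    by (simp_all add: algebra_simps)
  then have "a * (t * p1 - s * p2) = 0" "b * (t * q1 - s * q2) = 0"
    "a * (t * q1 - s * q2) + b * (t * p1 - s * p2) = 0"
    unfolding 1 2 by simp_all
  then have "t * p1 - s * p2 = 0 \<and> t * q1 - s * q2 = 0"
    by (rule coords_eq_0_if_plane_equations[OF ab])
  then have "t * (p1 * q2 - p2 * q1) = (s * p2) * q2 - p2 * (s * q2)"
    by (simp add: algebra_simps)
  then have "t * (p1 * q2 - p2 * q1) = 0" by simp
  with False show ?thesis by simp
qed

lemma det_eq_0_if_common_normal:
  fixes u1 u2 u3 u4 u5 xa ya xb yb xc yc :: real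
  assumes "u1 + 2 * xa * u3 + ya * u5 = 0" "u2 + 2 * ya * u4 + xa * u5 = 0"
    "u1 + 2 * xb * u3 + yb * u5 = 0" "u2 + 2 * yb * u4 + xb * u5 = 0"
    "u1 + 2 * xc * u3 + yc * u5 = 0" "u2 + 2 * yc * u4 + xc * u5 = 0"
    and nonzero: "u1 \<noteq> 0 \<or> u2 \<noteq> 0 \<or> u3 \<noteq> 0 \<or> u4 \<noteq> 0 \<or> u5 \<noteq> 0"
  shows "(xb - xa) * (yc - ya) - (xc - xa) * (yb - ya) = 0"
proof (rule ccontr)
  let ?d = "(xb - xa) * (yc - ya) - (xc - xa) * (yb - ya)"
  assume "?d \<noteq> 0"
  moreover have "?d * u3 = 0" "?d * u4 = 0" "?d * u5 = 0"
    using assms(1-6) by algebra+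
  ultimately have "u3 = 0" "u4 = 0" "u5 = 0" by simp_all
  with assms(1,2) nonzero show False by simp
qed

lemma det_zero_all_triples:
  fixes x y :: "nat \<Rightarrow> real"
  assumes "(x j - x i) * (y k - y i) - (x k - x i) * (y j - y i) = 0"
    and "a \<in> {i, j, k}" "b \<in> {i, j, k}" "c \<in> {i, j, k}"
  shows "(x b - x a) * (y c - y a) - (x c - x a) * (y b - y a) = 0"
  using assms by (auto simp: algebra_simps)

lemma cubic_of_plane_coords:
  fixes a b x y P3 P4 P5 R3 R4 R5 :: real
  assumes "2 * a * x = a * P3 + b * R3" "2 * b * y = a * P4 + b * R4" "a * y + b * x = a * P5 + b * R5"
  shows "P4 * a^3 + (R4 - 2 * P5) * a^2 * b + (P3 - 2 * R5) * a * b^2 + R3 * b^3 = 0"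
proof -
  have "a * a * (2 * b * y) + b * b * (2 * a * x) - 2 * a * b * (a * y + b * x) = 0"
    by (simp add: algebra_simps)
  then have "a * a * (a * P4 + b * R4) + b * b * (a * P3 + b * R3) - 2 * a * b * (a * P5 + b * R5) = 0"
    by (simp only: assms)
  then show ?thesis by (simp add: algebra_simps power2_eq_square power3_eq_cube)
qed

lemma card_zeros_le_1_if_independent:
  fixes A B :: "'i \<Rightarrow> real"
  assumes "finite K"
    and indep: "\<And>i j. i \<in> K \<Longrightarrow> j \<in> K \<Longrightarrow> i \<noteq> j \<Longrightarrow> A i * B j \<noteq> A j * B i"
  shows "card {i\<in>K. A i = 0} \<le> 1"
proof -
  have "i = j" if "i \<in> {i\<in>K. A i = 0}" "j \<in> {i\<in>K. A i = 0}" for i j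
    using indep[of i j] that by auto
  then show ?thesis using assms(1) by (simp add: card_le_Suc0_iff_eq)
qed

lemma binary_cubic_eq_0:
  fixes A B :: "'i \<Rightarrow> real" and c0 c1 c2 c3 :: real
  assumes K: "4 \<le> card K"
    and indep: "\<And>i j. i \<in> K \<Longrightarrow> j \<in> K \<Longrightarrow> i \<noteq> j \<Longrightarrow> A i * B j \<noteq> A j * B i"
    and roots: "\<And>i. i \<in> K \<Longrightarrow> c0 * A i^3 + c1 * A i^2 * B i + c2 * A i * B i^2 + c3 * B i^3 = 0"
  shows "c0 = 0 \<and> c1 = 0 \<and> c2 = 0 \<and> c3 = 0"
proof -
  \<comment> \<open>The ratios B/A of the points with A \<noteq> 0 are distinct roots of p; a point with
    A = 0 forces c3 = 0 and thus lowers the degree of p.\<close>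
  define K' where "K' = {i\<in>K. A i \<noteq> 0}"
  define p where "p = [:c0, c1, c2, c3:]"
  have fin: "finite K" using K card.infinite by fastforce
  have "K - K' = {i\<in>K. A i = 0}" by (auto simp: K'_def)
  then have "card (K - K') \<le> 1" using card_zeros_le_1_if_independent[OF fin indep] by simp
  moreover have "card (K - K') = card K - card K'"
    by (rule card_Diff_subset) (use fin in \<open>auto simp: K'_def\<close>)
  ultimately have card_K': "3 \<le> card K'" using K by linarith
  have "c3 = 0" if "card K' < 4"
  proof -
    have "K - K' \<noteq> {}"
    proof
      assume "K - K' = {}"
      then have "K' = K" by (auto simp: K'_def)
      with that K show False by simp
    qed
    then obtain i where i: "i \<in> K" "A i = 0" by (auto simp: K'_def)
    have "K \<noteq> {i}" using K by auto
    then obtain j where "j \<in> K" "j \<noteq> i" using i(1) by blast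
    then have "B i \<noteq> 0" using indep[OF i(1), of j] i(2) by auto
    then show ?thesis using roots[OF i(1)] i(2) by simp
  qed
  moreover have "inj_on (\<lambda>i. B i / A i) K'"
  proof (rule inj_onI, rule ccontr)
    fix i j assume "i \<in> K'" "j \<in> K'" "B i / A i = B j / A j" "i \<noteq> j"
    then show False using indep[of i j] by (auto simp: K'_def field_simps)
  qed
  moreover have "degree p \<le> 3" "c3 = 0 \<Longrightarrow> degree p \<le> 2"
    by (simp_all add: p_def)
  ultimately have deg: "degree p < card ((\<lambda>i. B i / A i) ` K')"
    using card_K' by (simp add: card_image) linarith
  have "poly p (B i / A i) = 0" if "i \<in> K'" for i
  proof -
    have "A i \<noteq> 0" using that by (simp add: K'_def)
    then show ?thesis using roots[of i] that
      by (simp add: p_def K'_def field_simps power2_eq_square power3_eq_cube)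
  qed
  then have "p = 0" using deg by (intro poly_eqI_degree[of "(\<lambda>i. B i / A i) ` K'"]) auto
  then show ?thesis by (simp add: p_def)
qed

lemma exists_third_element:
  assumes "3 \<le> card K"
  shows "\<exists>k\<in>K. k \<noteq> i \<and> k \<noteq> j"
proof (rule ccontr)
  assume "\<not> ?thesis"
  then have "K \<subseteq> {i, j}" by auto
  then have "card K \<le> card {i, j}" by (rule card_mono[rotated]) simp
  also have "\<dots> \<le> 2" by (simp add: card_insert_le_m1)
  finally show False using assms by simp
qed

lemma obtain_three_elements:
  assumes "3 \<le> card K"
  obtains i j k where "i \<in> K" "j \<in> K" "k \<in> K" "i \<noteq> j" "i \<noteq> k" "j \<noteq> k"
  by (metis assms exists_third_element)

lemma sum_ge_threshold_card:
  fixes f :: "'i \<Rightarrow> real"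
  assumes A: "finite A" and nonneg: "\<And>j. j \<in> A \<Longrightarrow> 0 \<le> f j" and "0 \<le> c"
    and few: "card {j\<in>A. f j < c} \<le> m"
  shows "c * real (card A - m) \<le> sum f A"
proof -
  let ?B = "{j\<in>A. f j \<ge> c}"
  have "A = ?B \<union> {j\<in>A. f j < c}" by auto
  then have "card A \<le> card ?B + card {j\<in>A. f j < c}" by (metis card_Un_le)
  then have "real (card A - m) \<le> real (card ?B)" using few by linarith
  then have "c * real (card A - m) \<le> c * real (card ?B)" using \<open>0 \<le> c\<close> by (rule mult_left_mono)
  also have "\<dots> = (\<Sum>j\<in>?B. c)" by simp
  also have "\<dots> \<le> sum f ?B" by (rule sum_mono) simp
  also have "\<dots> \<le> sum f A" using A nonneg by (intro sum_mono2) auto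
  finally show ?thesis .
qed

lemma exhaust_5:
  fixes i :: 5
  shows "i = 1 \<or> i = 2 \<or> i = 3 \<or> i = 4 \<or> i = 5"
proof (induct i)
  case (of_int z)
  then have "z = 0 \<or> z = 1 \<or> z = 2 \<or> z = 3 \<or> z = 4" by fastforce
  then show ?case by auto
qed

lemma forall_5: "(\<forall>i::5. P i) \<longleftrightarrow> P 1 \<and> P 2 \<and> P 3 \<and> P 4 \<and> P 5"
  by (metis exhaust_5)

lemma vec5_eq_iff:
  "(a::'a^5) = b \<longleftrightarrow> a$1 = b$1 \<and> a$2 = b$2 \<and> a$3 = b$3 \<and> a$4 = b$4 \<and> a$5 = b$5"
  by (simp add: vec_eq_iff forall_5)

lemma UNIV_5: "(UNIV::5 set) = {1, 2, 3, 4, 5}"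
  using exhaust_5 by auto

lemma inner_vec5: "(a::real^5) \<bullet> b = a$1 * b$1 + a$2 * b$2 + a$3 * b$3 + a$4 * b$4 + a$5 * b$5"
  unfolding inner_vec_def UNIV_5 by simp

lemma nvec_nth [simp]:
  "nvec x y $ 1 = 1" "nvec x y $ 2 = 0" "nvec x y $ 3 = 2 * x" "nvec x y $ 4 = 0" "nvec x y $ 5 = y"
  by (simp_all add: nvec_def vector_def)

lemma mvec_nth [simp]:
  "mvec x y $ 1 = 0" "mvec x y $ 2 = 1" "mvec x y $ 3 = 0" "mvec x y $ 4 = 2 * y" "mvec x y $ 5 = x"
  by (simp_all add: mvec_def vector_def)

lemma subspace_Vplane: "subspace (Vplane x y)"
  unfolding Vplane_def by simp

lemma nvec_in_Vplane: "nvec x y \<in> Vplane x y" and mvec_in_Vplane: "mvec x y \<in> Vplane x y"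
  unfolding Vplane_def by (simp_all add: span_base)

lemma Vplane_iff:
  "z \<in> Vplane x y \<longleftrightarrow> z$3 = 2 * z$1 * x \<and> z$4 = 2 * z$2 * y \<and> z$5 = z$1 * y + z$2 * x"
proof
  assume "z \<in> Vplane x y"
  then obtain c where "z - c *\<^sub>R nvec x y \<in> span {mvec x y}"
    unfolding Vplane_def span_insert by blast
  then obtain d where "z - c *\<^sub>R nvec x y = d *\<^sub>R mvec x y"
    unfolding span_singleton by blast
  then have "z = d *\<^sub>R mvec x y + c *\<^sub>R nvec x y"
    by (simp add: diff_eq_eq)
  then show "z$3 = 2 * z$1 * x \<and> z$4 = 2 * z$2 * y \<and> z$5 = z$1 * y + z$2 * x"
    by simp
next
  assume "z$3 = 2 * z$1 * x \<and> z$4 = 2 * z$2 * y \<and> z$5 = z$1 * y + z$2 * x"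
  then have "z = z$1 *\<^sub>R nvec x y + z$2 *\<^sub>R mvec x y"
    unfolding vec5_eq_iff by (simp add: mult.commute)
  then show "z \<in> Vplane x y"
    by (metis nvec_in_Vplane mvec_in_Vplane subspace_Vplane subspace_add subspace_scale)
qed

lemma Vplane_eq_0I: "z \<in> Vplane x y \<Longrightarrow> z$1 = 0 \<Longrightarrow> z$2 = 0 \<Longrightarrow> z = 0"
  unfolding Vplane_iff vec5_eq_iff by simp

lemma dim_Vplane: "dim (Vplane x y) = 2"
proof -
  have "nvec x y \<notin> span {mvec x y}"
  proof
    assume "nvec x y \<in> span {mvec x y}"
    then obtain c where "nvec x y = c *\<^sub>R mvec x y" by (auto simp: span_singleton)
    then have "nvec x y $ 1 = c * mvec x y $ 1" by simp
    then show False by simp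
  qed
  moreover have "mvec x y \<noteq> 0" by (metis mvec_nth(2) zero_index zero_neq_one)
  ultimately show ?thesis unfolding Vplane_def by (simp add: dim_insert)
qed

lemma Vplane_shift_eqs:
  assumes "z \<in> Vplane x0 y0" "z + s *\<^sub>R c \<in> Vplane x y" "c$1 = 0" "c$2 = 0"
  shows "2 * z$1 * (x - x0) = s * c$3" "2 * z$2 * (y - y0) = s * c$4"
    "z$1 * (y - y0) + z$2 * (x - x0) = s * c$5"
  using assms by (simp_all add: Vplane_iff algebra_simps)

lemma Vplane_coords_in_basis:
  assumes "z \<in> Vplane x y" "z = z$1 *\<^sub>R P + z$2 *\<^sub>R R"
  shows "2 * z$1 * x = z$1 * P$3 + z$2 * R$3" "2 * z$2 * y = z$1 * P$4 + z$2 * R$4"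
    "z$1 * y + z$2 * x = z$1 * P$5 + z$2 * R$5"
proof -
  have e: "z $ n = z$1 * P$n + z$2 * R$n" for n
  proof -
    have "z $ n = (z$1 *\<^sub>R P + z$2 *\<^sub>R R) $ n" using assms(2) by (rule arg_cong)
    then show ?thesis by (simp only: vector_add_component vector_scaleR_component real_scaleR_def)
  qed
  have "z$3 = 2 * z$1 * x" "z$4 = 2 * z$2 * y" "z$5 = z$1 * y + z$2 * x"
    using assms(1) by (simp_all add: Vplane_iff)
  with e[of 3] e[of 4] e[of 5]
  show "2 * z$1 * x = z$1 * P$3 + z$2 * R$3" "2 * z$2 * y = z$1 * P$4 + z$2 * R$4"
    "z$1 * y + z$2 * x = z$1 * P$5 + z$2 * R$5"
    by linarith+
qed

lemma subspace_Int_ne_0_iff: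
  assumes "subspace A" "subspace B"
  shows "A \<inter> B \<noteq> {0} \<longleftrightarrow> (\<exists>z. z \<noteq> 0 \<and> z \<in> A \<and> z \<in> B)"
  using subspace_0[OF assms(1)] subspace_0[OF assms(2)] by blast

lemma subspace_dim_le_2_span:
  fixes U :: "'a::euclidean_space set"
  assumes U: "subspace U" "dim U \<le> 2" and "c \<in> U" "z \<in> U" "w \<in> U" "z \<notin> span {c}" "c \<noteq> 0"
  obtains \<alpha> \<beta> where "w = \<alpha> *\<^sub>R z + \<beta> *\<^sub>R c"
proof -
  have "dim {z, c} = 2" using assms(6,7) by (simp add: dim_insert)
  then have "span {z, c} = U"
    using dim_eq_span[of "{z, c}" U] assms(1-4) by (simp add: span_eq_iff)
  then have "w \<in> span {z, c}" using assms(5) by blast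
  then obtain \<alpha> where "w - \<alpha> *\<^sub>R z \<in> span {c}" unfolding span_insert by blast
  then obtain \<beta> where "w - \<alpha> *\<^sub>R z = \<beta> *\<^sub>R c" unfolding span_singleton by blast
  then show thesis by (intro that[of \<alpha> \<beta>]) (simp add: diff_eq_eq)
qed

lemma orth_proj_in_orthogonal:
  fixes W :: "'a::euclidean_space set"
  assumes "subspace W"
  shows "orth_proj W z \<in> W \<and> (\<forall>w\<in>W. (z - orth_proj W z) \<bullet> w = 0)"
proof -
  obtain q r where q: "q \<in> span W" "\<And>w. w \<in> span W \<Longrightarrow> orthogonal r w" "z = q + r"
    using orthogonal_subspace_decomp_exists by metis
  have span_W: "span W = W" using assms by (simp add: span_eq_iff)
  have "\<exists>!q. q \<in> W \<and> (\<forall>w\<in>W. (z - q) \<bullet> w = 0)"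
  proof (rule ex1I)
    show "q \<in> W \<and> (\<forall>w\<in>W. (z - q) \<bullet> w = 0)"
      using q span_W by (simp add: orthogonal_def)
  next
    fix q' assume q': "q' \<in> W \<and> (\<forall>w\<in>W. (z - q') \<bullet> w = 0)"
    have "q - q' \<in> W" using q q' span_W assms subspace_diff by blast
    then have "(z - q') \<bullet> (q - q') - (z - q) \<bullet> (q - q') = 0"
      using q q' span_W by (simp add: orthogonal_def)
    then have "(q - q') \<bullet> (q - q') = 0" by (simp add: algebra_simps)
    then show "q' = q" by simp
  qed
  then show ?thesis unfolding orth_proj_def by (rule theI')
qed

lemma orthogonal_to_orth_proj_image_lt_dim:
  fixes W V :: "'a::euclidean_space set"
  assumes W: "subspace W" and dim_lt: "dim (orth_proj W ` V) < dim W"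
  obtains z where "z \<noteq> 0" "z \<in> W" "\<forall>v\<in>V. z \<bullet> v = 0"
proof -
  let ?P = "orth_proj W"
  have "?P ` V \<subseteq> W" using orth_proj_in_orthogonal[OF W] by blast
  then have "span (?P ` V) \<subseteq> span W" by (rule span_mono)
  moreover have "span (?P ` V) \<noteq> span W" using dim_lt by (metis dim_span less_irrefl)
  ultimately obtain z where z: "z \<noteq> 0" "z \<in> span W" "\<And>w. w \<in> span (?P ` V) \<Longrightarrow> orthogonal z w"
    using orthogonal_to_subspace_exists_gen by (metis psubsetI)
  have "z \<in> W" using z(2) W by (metis span_eq_iff)
  have "z \<bullet> v = 0" if "v \<in> V" for v
  proof -
    have "z \<bullet> ?P v = 0" using z(3) that by (simp add: orthogonal_def span_base)
    moreover have "(v - ?P v) \<bullet> z = 0" using orth_proj_in_orthogonal[OF W] \<open>z \<in> W\<close> by blast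
    ultimately show ?thesis by (simp add: algebra_simps inner_commute)
  qed
  with z(1) \<open>z \<in> W\<close> show thesis by (intro that) auto
qed

lemma orthogonal_if_orth_proj_image_dim_0:
  fixes W V :: "'a::euclidean_space set"
  assumes W: "subspace W" and "dim (orth_proj W ` V) = 0" "v \<in> V" "w \<in> W"
  shows "v \<bullet> w = 0"
proof -
  have "orth_proj W v = 0" using assms(2,3) by auto
  then show ?thesis using orth_proj_in_orthogonal[OF W, of v] assms(4) by auto
qed

lemma subspace_graph_basis:
  fixes U :: "(real^5) set"
  assumes U: "subspace U" and graph: "\<And>c. c \<in> U \<Longrightarrow> c$1 = 0 \<Longrightarrow> c$2 = 0 \<Longrightarrow> c = 0"
    and Z: "Z \<in> U" "Z' \<in> U" and indep: "Z$1 * Z'$2 \<noteq> Z'$1 * Z$2"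
  obtains P R where "P \<in> U" "R \<in> U" "\<And>z. z \<in> U \<Longrightarrow> z = z$1 *\<^sub>R P + z$2 *\<^sub>R R"
proof
  define d where "d = Z$1 * Z'$2 - Z'$1 * Z$2"
  have "d \<noteq> 0" using indep by (simp add: d_def)
  define P where "P = (1/d) *\<^sub>R (Z'$2 *\<^sub>R Z - Z$2 *\<^sub>R Z')"
  define R where "R = (1/d) *\<^sub>R (Z$1 *\<^sub>R Z' - Z'$1 *\<^sub>R Z)"
  show "P \<in> U" "R \<in> U"
    unfolding P_def R_def using U Z by (simp_all add: subspace_diff subspace_scale)
  have "P$1 = (1/d) * (Z'$2 * Z$1 - Z$2 * Z'$1)" "R$2 = (1/d) * (Z$1 * Z'$2 - Z'$1 * Z$2)"
    "P$2 = 0" "R$1 = 0"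
    unfolding P_def R_def by (simp_all add: algebra_simps)
  moreover have "Z'$2 * Z$1 - Z$2 * Z'$1 = d" "Z$1 * Z'$2 - Z'$1 * Z$2 = d"
    by (simp_all add: d_def algebra_simps)
  ultimately have P12: "P$1 = 1" "P$2 = 0" and R12: "R$1 = 0" "R$2 = 1"
    using \<open>d \<noteq> 0\<close> by simp_all
  fix z assume "z \<in> U"
  then have "z - (z$1 *\<^sub>R P + z$2 *\<^sub>R R) \<in> U"
    using U \<open>P \<in> U\<close> \<open>R \<in> U\<close> by (simp add: subspace_diff subspace_add subspace_scale)
  moreover have "(z - (z$1 *\<^sub>R P + z$2 *\<^sub>R R)) $ 1 = 0" "(z - (z$1 *\<^sub>R P + z$2 *\<^sub>R R)) $ 2 = 0"
    by (simp_all add: P12 R12)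
  ultimately show "z = z$1 *\<^sub>R P + z$2 *\<^sub>R R" using graph by fastforce
qed

locale general_position =
  fixes I :: "nat set" and x y :: "nat \<Rightarrow> real"
  assumes det_nonzero:
    "\<lbrakk>i \<in> I; j \<in> I; k \<in> I; i \<noteq> j; i \<noteq> k; j \<noteq> k\<rbrakk>
      \<Longrightarrow> (x j - x i) * (y k - y i) - (x k - x i) * (y j - y i) \<noteq> 0"
begin

abbreviation plane :: "nat \<Rightarrow> (real^5) set" where
  "plane j \<equiv> Vplane (x j) (y j)"

lemma orthogonal_to_three_planes_eq_0:
  assumes ijk: "i \<in> I" "j \<in> I" "k \<in> I" "i \<noteq> j" "i \<noteq> k" "j \<noteq> k"
    and orth: "\<And>a w. a \<in> {i, j, k} \<Longrightarrow> w \<in> plane a \<Longrightarrow> u \<bullet> w = 0"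
  shows "u = 0"
proof (rule ccontr)
  assume "u \<noteq> 0"
  then have nonzero: "u$1 \<noteq> 0 \<or> u$2 \<noteq> 0 \<or> u$3 \<noteq> 0 \<or> u$4 \<noteq> 0 \<or> u$5 \<noteq> 0"
    by (simp add: vec5_eq_iff)
  have "u$1 + 2 * x a * u$3 + y a * u$5 = 0 \<and> u$2 + 2 * y a * u$4 + x a * u$5 = 0"
    if "a \<in> {i, j, k}" for a
    using orth[OF that nvec_in_Vplane] orth[OF that mvec_in_Vplane]
    by (simp add: inner_vec5 algebra_simps)
  then have "(x j - x i) * (y k - y i) - (x k - x i) * (y j - y i) = 0"
    using nonzero by (intro det_eq_0_if_common_normal) auto
  with det_nonzero[OF ijk] show False ..
qed

lemma plane_inter_eq_0:
  assumes ijk: "i \<in> I" "j \<in> I" "k \<in> I" "i \<noteq> j" "i \<noteq> k" "j \<noteq> k"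
    and z: "z \<in> plane i" "z \<in> plane j"
  shows "z = 0"
proof (rule ccontr)
  assume "z \<noteq> 0"
  then have "z$1 \<noteq> 0 \<or> z$2 \<noteq> 0" using Vplane_eq_0I z(1) by blast
  moreover have "z$1 * (x i - x j) = 0" "z$2 * (y i - y j) = 0"
    "z$1 * (y i - y j) + z$2 * (x i - x j) = 0"
    using z by (simp_all add: Vplane_iff algebra_simps)
  ultimately have "x i - x j = 0 \<and> y i - y j = 0" by (rule coords_eq_0_if_plane_equations)
  with det_nonzero[OF ijk] show False by simp
qed

lemma three_planes_meeting_subspace_with_vertical_vector:
  assumes U: "subspace U" "dim U \<le> 2" and c: "c \<in> U" "c \<noteq> 0" "c$1 = 0" "c$2 = 0"
    and ijk: "i \<in> I" "j \<in> I" "k \<in> I" "i \<noteq> j" "i \<noteq> k" "j \<noteq> k"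
    and meet: "\<And>a. a \<in> {i, j, k} \<Longrightarrow> plane a \<inter> U \<noteq> {0}"
  shows False
proof -
  have "\<exists>z. z \<noteq> 0 \<and> z \<in> plane a \<and> z \<in> U" if "a \<in> {i, j, k}" for a
    using meet[OF that] subspace_Int_ne_0_iff[OF subspace_Vplane U(1)] by blast
  then obtain Z where Z: "\<And>a. a \<in> {i, j, k} \<Longrightarrow> Z a \<noteq> 0 \<and> Z a \<in> plane a \<and> Z a \<in> U"
    by metis
  let ?z = "Z i"
  have z: "?z \<noteq> 0" "?z \<in> plane i" "?z \<in> U" using Z[of i] by auto
  have z12: "?z$1 \<noteq> 0 \<or> ?z$2 \<noteq> 0" using Vplane_eq_0I z(1,2) by blast
  have "?z \<notin> span {c}"
  proof
    assume "?z \<in> span {c}"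
    then obtain t where "?z = t *\<^sub>R c" by (auto simp: span_singleton)
    with z12 c show False by simp
  qed
  have "\<exists>s. ?z + s *\<^sub>R c \<in> plane a" if a: "a \<in> {i, j, k}" for a
  proof -
    obtain \<alpha> \<beta> where Za: "Z a = \<alpha> *\<^sub>R ?z + \<beta> *\<^sub>R c"
      using subspace_dim_le_2_span[OF U c(1) z(3) _ \<open>?z \<notin> span {c}\<close> c(2)] Z[OF a] by blast
    have "\<alpha> \<noteq> 0"
    proof
      assume "\<alpha> = 0"
      then have "Z a $ 1 = 0" "Z a $ 2 = 0" using Za c by simp_all
      then show False using Vplane_eq_0I Z[OF a] by blast
    qed
    then have "(1/\<alpha>) *\<^sub>R Z a = ?z + (\<beta>/\<alpha>) *\<^sub>R c" by (simp add: Za scaleR_add_right)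
    moreover have "(1/\<alpha>) *\<^sub>R Z a \<in> plane a" using Z[OF a] subspace_Vplane subspace_scale by blast
    ultimately show ?thesis by metis
  qed
  then obtain s t where s: "?z + s *\<^sub>R c \<in> plane j" and t: "?z + t *\<^sub>R c \<in> plane k" by blast
  have "(x j - x i) * (y k - y i) - (x k - x i) * (y j - y i) = 0"
    by (rule displacements_parallel[OF z12 Vplane_shift_eqs[OF z(2) s c(3,4)]
          Vplane_shift_eqs[OF z(2) t c(3,4)]])
  with det_nonzero[OF ijk] show False ..
qed

lemma plane_vectors_independent_in_graph_subspace:
  assumes U: "subspace U" and graph: "\<And>c. c \<in> U \<Longrightarrow> c$1 = 0 \<Longrightarrow> c$2 = 0 \<Longrightarrow> c = 0"
    and ijk: "i \<in> I" "j \<in> I" "k \<in> I" "i \<noteq> j" "i \<noteq> k" "j \<noteq> k"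
    and zi: "zi \<noteq> 0" "zi \<in> plane i" "zi \<in> U" and zj: "zj \<noteq> 0" "zj \<in> plane j" "zj \<in> U"
  shows "zi$1 * zj$2 \<noteq> zj$1 * zi$2"
proof
  assume dep: "zi$1 * zj$2 = zj$1 * zi$2"
  define t where "t = (if zj$1 \<noteq> 0 then zi$1 / zj$1 else zi$2 / zj$2)"
  have "zj$1 \<noteq> 0 \<or> zj$2 \<noteq> 0" using Vplane_eq_0I zj by blast
  then have "(zi - t *\<^sub>R zj) $ 1 = 0 \<and> (zi - t *\<^sub>R zj) $ 2 = 0"
    using dep by (auto simp: t_def field_simps)
  moreover have "zi - t *\<^sub>R zj \<in> U" using zi(3) zj(3) U by (simp add: subspace_diff subspace_scale)
  ultimately have "zi - t *\<^sub>R zj = 0" using graph by blast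
  then have "zi \<in> plane j" using zj(2) by (simp add: subspace_scale[OF subspace_Vplane])
  then have "zi = 0" using plane_inter_eq_0[OF ijk zi(2)] by blast
  with zi(1) show False ..
qed

lemma four_planes_meeting_graph_subspace:
  assumes U: "subspace U" and graph: "\<And>c. c \<in> U \<Longrightarrow> c$1 = 0 \<Longrightarrow> c$2 = 0 \<Longrightarrow> c = 0"
    and K: "K \<subseteq> I" "4 \<le> card K" and meet: "\<And>j. j \<in> K \<Longrightarrow> plane j \<inter> U \<noteq> {0}"
  shows False
proof -
  have "\<exists>z. z \<noteq> 0 \<and> z \<in> plane j \<and> z \<in> U" if "j \<in> K" for j
    using meet[OF that] subspace_Int_ne_0_iff[OF subspace_Vplane U] by blast
  then obtain Z where Z: "\<And>j. j \<in> K \<Longrightarrow> Z j \<noteq> 0 \<and> Z j \<in> plane j \<and> Z j \<in> U" by metis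
  have indep: "Z i $ 1 * Z j $ 2 \<noteq> Z j $ 1 * Z i $ 2" if ij: "i \<in> K" "j \<in> K" "i \<noteq> j" for i j
  proof -
    obtain k where k: "k \<in> K" "k \<noteq> i" "k \<noteq> j" using exists_third_element[of K i j] K(2) by auto
    show ?thesis
      by (rule plane_vectors_independent_in_graph_subspace[OF U graph, of i j k])
        (use ij k K(1) Z[OF ij(1)] Z[OF ij(2)] in auto)
  qed
  obtain j1 j2 j3 where j: "j1 \<in> K" "j2 \<in> K" "j3 \<in> K" "j1 \<noteq> j2" "j1 \<noteq> j3" "j2 \<noteq> j3"
    using obtain_three_elements[of K] K(2) by auto
  have Z_plane: "Z j \<in> plane j" and Z_U: "Z j \<in> U" if "j \<in> K" for j using Z[OF that] by blast+
  obtain P R where basis: "\<And>z. z \<in> U \<Longrightarrow> z = z$1 *\<^sub>R P + z$2 *\<^sub>R R"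
    using subspace_graph_basis[OF U graph Z_U[OF j(1)] Z_U[OF j(2)] indep[OF j(1,2,4)]] by blast
  have coords: "2 * Z j $ 1 * x j = Z j $ 1 * P$3 + Z j $ 2 * R$3"
      "2 * Z j $ 2 * y j = Z j $ 1 * P$4 + Z j $ 2 * R$4"
      "Z j $ 1 * y j + Z j $ 2 * x j = Z j $ 1 * P$5 + Z j $ 2 * R$5" if "j \<in> K" for j
    by (rule Vplane_coords_in_basis[OF Z_plane[OF that] basis[OF Z_U[OF that]]])+
  have cubic: "P$4 * (Z j $ 1)^3 + (R$4 - 2 * P$5) * (Z j $ 1)^2 * Z j $ 2
      + (P$3 - 2 * R$5) * Z j $ 1 * (Z j $ 2)^2 + R$3 * (Z j $ 2)^3 = 0" if "j \<in> K" for j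
    using coords[OF that] by (rule cubic_of_plane_coords)
  have coeffs: "P$4 = 0 \<and> R$4 - 2 * P$5 = 0 \<and> P$3 - 2 * R$5 = 0 \<and> R$3 = 0"
    using binary_cubic_eq_0[where A = "\<lambda>j. Z j $ 1" and B = "\<lambda>j. Z j $ 2", OF K(2) indep] cubic
    by blast
  have vertical: "x j = R$5" if "j \<in> K" for j
  proof (cases "Z j $ 1 = 0")
    case True
    then have "Z j $ 2 \<noteq> 0" using Vplane_eq_0I Z[OF that] by blast
    then show ?thesis using coords[OF that] True coeffs by simp
  next
    case False
    then show ?thesis using coords(1)[OF that] coeffs by simp
  qed
  have "(x j2 - x j1) * (y j3 - y j1) - (x j3 - x j1) * (y j2 - y j1) = 0"
    using vertical j by simp
  with det_nonzero j K(1) show False by blast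
qed

lemma card_planes_meeting_le_3:
  assumes U: "subspace U" "dim U \<le> 2"
  shows "card {j\<in>I. plane j \<inter> U \<noteq> {0}} \<le> 3"
proof (rule ccontr)
  let ?K = "{j\<in>I. plane j \<inter> U \<noteq> {0}}"
  assume "\<not> card ?K \<le> 3"
  then have K: "4 \<le> card ?K" by simp
  show False
  proof (cases "\<exists>c\<in>U. c \<noteq> 0 \<and> c$1 = 0 \<and> c$2 = 0")
    case True
    then obtain c where c: "c \<in> U" "c \<noteq> 0" "c$1 = 0" "c$2 = 0" by blast
    have "3 \<le> card ?K" using K by simp
    then obtain i j k where "i \<in> ?K" "j \<in> ?K" "k \<in> ?K" "i \<noteq> j" "i \<noteq> k" "j \<noteq> k"
      by (rule obtain_three_elements)
    then show False
      using three_planes_meeting_subspace_with_vertical_vector[OF U c, of i j k] by auto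
  next
    case False
    then have "\<And>c. c \<in> U \<Longrightarrow> c$1 = 0 \<Longrightarrow> c$2 = 0 \<Longrightarrow> c = 0" by blast
    then show False using four_planes_meeting_graph_subspace[OF U(1) _ _ K] by blast
  qed
qed

lemma card_planes_meeting_le_dim:
  assumes I: "3 \<le> card I" and U: "subspace U" "dim U \<le> 1"
  shows "card {j\<in>I. plane j \<inter> U \<noteq> {0}} \<le> dim U"
proof (cases "dim U = 0")
  case True
  then have "U \<subseteq> {0}" by simp
  then have no_meet: "{j\<in>I. plane j \<inter> U \<noteq> {0}} = {}"
    using subspace_Int_ne_0_iff[OF subspace_Vplane U(1)] by auto
  show ?thesis unfolding no_meet by simp
next
  case False
  then have dim_U: "dim U = 1" using U(2) by linarith
  have "finite I" using I by (intro card_ge_0_finite) simp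
  have "i = j" if i: "i \<in> I" "plane i \<inter> U \<noteq> {0}" and j: "j \<in> I" "plane j \<inter> U \<noteq> {0}" for i j
  proof (rule ccontr)
    assume "i \<noteq> j"
    obtain zi where zi: "zi \<noteq> 0" "zi \<in> plane i" "zi \<in> U"
      using i(2) subspace_Int_ne_0_iff[OF subspace_Vplane U(1)] by blast
    obtain zj where zj: "zj \<noteq> 0" "zj \<in> plane j" "zj \<in> U"
      using j(2) subspace_Int_ne_0_iff[OF subspace_Vplane U(1)] by blast
    have "dim {zi} = 1" using zi(1) by (simp add: dim_insert)
    then have "span {zi} = span U" using zi(3) dim_U by (intro dim_eq_span) auto
    then have "zj \<in> span {zi}" using zj(3) span_base by blast
    then obtain t where "zj = t *\<^sub>R zi" by (auto simp: span_singleton)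
    then have "zj \<in> plane i" using zi(2) by (simp add: subspace_scale[OF subspace_Vplane])
    moreover obtain k where "k \<in> I" "k \<noteq> i" "k \<noteq> j" using exists_third_element[OF I] by blast
    ultimately have "zj = 0" using plane_inter_eq_0[of i j k zj] i(1) j(1) \<open>i \<noteq> j\<close> zj(2) by auto
    with zj(1) show False ..
  qed
  then have "card {j\<in>I. plane j \<inter> U \<noteq> {0}} \<le> Suc 0"
    using \<open>finite I\<close> by (subst card_le_Suc0_iff_eq) auto
  with dim_U show ?thesis by simp
qed

lemma card_planes_orthogonal_le_2:
  assumes "u \<noteq> 0"
  shows "card {j\<in>I. \<forall>w\<in>plane j. u \<bullet> w = 0} \<le> 2"
proof (rule ccontr)
  let ?K = "{j\<in>I. \<forall>w\<in>plane j. u \<bullet> w = 0}"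
  assume "\<not> card ?K \<le> 2"
  then obtain i j k where "i \<in> ?K" "j \<in> ?K" "k \<in> ?K" "i \<noteq> j" "i \<noteq> k" "j \<noteq> k"
    using obtain_three_elements[of ?K] by auto
  then have "u = 0" by (intro orthogonal_to_three_planes_eq_0[of i j k]) auto
  with assms show False ..
qed

lemma sum_dim_proj_ge_if_nonzero:
  assumes "finite I" "v \<in> V" "v \<noteq> 0"
  shows "real (card I - 2) \<le> (\<Sum>j\<in>I. real (dim (orth_proj (plane j) ` V)))"
proof -
  have "{j\<in>I. real (dim (orth_proj (plane j) ` V)) < 1} \<subseteq> {j\<in>I. \<forall>w\<in>plane j. v \<bullet> w = 0}"
    using orthogonal_if_orth_proj_image_dim_0[OF subspace_Vplane _ \<open>v \<in> V\<close>] by auto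
  then have "card {j\<in>I. real (dim (orth_proj (plane j) ` V)) < 1}
      \<le> card {j\<in>I. \<forall>w\<in>plane j. v \<bullet> w = 0}"
    using \<open>finite I\<close> by (intro card_mono) auto
  also have "\<dots> \<le> 2" using card_planes_orthogonal_le_2[OF \<open>v \<noteq> 0\<close>] .
  finally have "1 * real (card I - 2) \<le> (\<Sum>j\<in>I. real (dim (orth_proj (plane j) ` V)))"
    by (intro sum_ge_threshold_card[OF \<open>finite I\<close>]) auto
  then show ?thesis by simp
qed

lemma sum_dim_proj_ge_if_few_planes_meet_complement:
  assumes "finite I" and few: "card {j\<in>I. plane j \<inter> {z. \<forall>v\<in>V. orthogonal v z} \<noteq> {0}} \<le> m"
  shows "2 * real (card I - m) \<le> (\<Sum>j\<in>I. real (dim (orth_proj (plane j) ` V)))"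
proof -
  have "plane j \<inter> {z. \<forall>v\<in>V. orthogonal v z} \<noteq> {0}"
    if "real (dim (orth_proj (plane j) ` V)) < 2" for j
  proof -
    have "dim (orth_proj (plane j) ` V) < dim (plane j)" using that dim_Vplane by simp
    then obtain z where "z \<noteq> 0" "z \<in> plane j" "\<forall>v\<in>V. z \<bullet> v = 0"
      by (rule orthogonal_to_orth_proj_image_lt_dim[OF subspace_Vplane])
    then show ?thesis by (auto simp: orthogonal_def inner_commute)
  qed
  then have "{j\<in>I. real (dim (orth_proj (plane j) ` V)) < 2}
      \<subseteq> {j\<in>I. plane j \<inter> {z. \<forall>v\<in>V. orthogonal v z} \<noteq> {0}}" by auto
  then have "card {j\<in>I. real (dim (orth_proj (plane j) ` V)) < 2}
      \<le> card {j\<in>I. plane j \<inter> {z. \<forall>v\<in>V. orthogonal v z} \<noteq> {0}}"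
    using \<open>finite I\<close> by (intro card_mono) auto
  also have "\<dots> \<le> m" by (rule few)
  finally show ?thesis by (intro sum_ge_threshold_card[OF \<open>finite I\<close>]) auto
qed


lemma four_dim_le_sum_dim_proj:
  assumes I: "finite I" "10 \<le> card I" and "subspace V"
  shows "4 * real (dim V) \<le> (\<Sum>j\<in>I. real (dim (orth_proj (plane j) ` V)))"
proof -
  let ?U = "{z. \<forall>v\<in>V. orthogonal v z}"
  let ?S = "\<Sum>j\<in>I. real (dim (orth_proj (plane j) ` V))"
  have dims: "dim ?U + dim V = 5"
    using dim_subspace_orthogonal_to_vectors[OF \<open>subspace V\<close>, of UNIV] by simp
  have "subspace ?U" by (rule subspace_orthogonal_to_vectors)
  consider "dim V = 0" | "1 \<le> dim V \<and> dim V \<le> 2" | "dim V = 3" | "4 \<le> dim V" by linarith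
  then show ?thesis
  proof cases
    case 1
    have "0 \<le> ?S" by (rule sum_nonneg) simp
    then show ?thesis unfolding 1 by simp
  next
    case 2
    then have "\<not> V \<subseteq> {0}" by (metis dim_eq_0 not_one_le_zero)
    then obtain v where v: "v \<in> V" "v \<noteq> 0" by blast
    show ?thesis using sum_dim_proj_ge_if_nonzero[OF I(1) v] 2 I(2) by linarith
  next
    case 3
    then show ?thesis
      using sum_dim_proj_ge_if_few_planes_meet_complement[OF I(1) card_planes_meeting_le_3[OF \<open>subspace ?U\<close>]]
        dims I(2) by simp
  next
    case 4
    then have "dim ?U \<le> 1" using dims by simp
    moreover have "3 \<le> card I" using I(2) by simp
    ultimately show ?thesis
      using sum_dim_proj_ge_if_few_planes_meet_complement[OF I(1) card_planes_meeting_le_dim[OF _ \<open>subspace ?U\<close>]]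
        dims I(2) by simp
  qed
qed

end

lemma nu_transverse_imp_general_position:
  assumes "0 < \<nu>" and transverse: "nu_transverse \<nu> (\<lambda>j. {(x j, y j)})"
  shows "general_position {1..10} x y"
proof
  fix i j k :: nat
  assume ijk: "i \<in> {1..10}" "j \<in> {1..10}" "k \<in> {1..10}" "i \<noteq> j" "i \<noteq> k" "j \<noteq> k"
  show "(x j - x i) * (y k - y i) - (x k - x i) * (y j - y i) \<noteq> 0"
  proof
    assume det: "(x j - x i) * (y k - y i) - (x k - x i) * (y j - y i) = 0"
    note triples = conjunct1[OF conjunct2[OF transverse[unfolded nu_transverse_def]]]
    have "\<exists>\<pi>. \<pi> permutes {i, j, k} \<and>
        (let xs = (\<lambda>l. fst ((\<lambda>l. (x l, y l)) (\<pi> l))); ys = (\<lambda>l. snd ((\<lambda>l. (x l, y l)) (\<pi> l))) in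
          \<bar>(ys j - ys i) * ((xs j - xs i) * (ys k - ys i) - (xs k - xs i) * (ys j - ys i))\<bar> \<ge> \<nu>)"
      by (rule triples[rule_format, OF ijk(1,2,3), of "\<lambda>l. (x l, y l)"]) (use ijk in auto)
    then obtain \<pi> where \<pi>: "\<pi> permutes {i, j, k}" and
      bound: "\<nu> \<le> \<bar>(y (\<pi> j) - y (\<pi> i)) * ((x (\<pi> j) - x (\<pi> i)) * (y (\<pi> k) - y (\<pi> i))
        - (x (\<pi> k) - x (\<pi> i)) * (y (\<pi> j) - y (\<pi> i)))\<bar>"
      by (auto simp: Let_def)
    have "\<pi> i \<in> {i, j, k}" "\<pi> j \<in> {i, j, k}" "\<pi> k \<in> {i, j, k}"
      using permutes_in_image[OF \<pi>] by auto
    then have "(x (\<pi> j) - x (\<pi> i)) * (y (\<pi> k) - y (\<pi> i)) - (x (\<pi> k) - x (\<pi> i)) * (y (\<pi> j) - y (\<pi> i)) = 0"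
      using det_zero_all_triples[OF det] by blast
    with bound \<open>0 < \<nu>\<close> show False by simp
  qed
qed

theorem proposition4p2:
  fixes x y :: "nat \<Rightarrow> real" and \<nu> :: real and V :: "(real^5) set"
  assumes "\<forall>j\<in>{1..10}. x j \<in> {0..1} \<and> y j \<in> {0..1}"
    and "\<nu> > 0"
    and "nu_transverse \<nu> (\<lambda>j. {(x j, y j)})"
    and "subspace V"
  shows "real (dim V) \<le> (1/4) * (\<Sum>j=1..10. real (dim (orth_proj (Vplane (x j) (y j)) ` V)))"
proof -
  interpret general_position "{1..10}" x y
    using assms(2,3) by (rule nu_transverse_imp_general_position)
  have "4 * real (dim V) \<le> (\<Sum>j=1..10. real (dim (orth_proj (plane j) ` V)))"
    using four_dim_le_sum_dim_proj[OF _ _ assms(4)] by simp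
  then show ?thesis by simp
qed

end
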